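(* Let $t\geq 4$ be an even integer and let $a,b,c$ be positive integers with $a\geq 2$ and $a+b=t-1$. Then the multiset $\{1^a,2^b,t^c\}$ admits a linear realization.
   Context: $\{1^a,2^b,t^{c}\}$ is the multiset with $a$ copies of $1$, $b$ copies of $2$ and $c$ copies of $t$. For a multiset $L$ of positive integers with $|L|=v-1$, each at most $v-1$, a linear realization of $L$ is a Hamiltonian path $[x_0,\dots,x_{v-1}]$ of the complete graph on $\{0,\dots,v-1\}$ such that the multiset $\{|x_i-x_{i+1}| : i=0,\dots,v-2\}$ equals $L$. *)

theory Defs
  imports Main "HOL-Library.Multiset"
begin

definition absdiff :: "nat \<Rightarrow> nat \<Rightarrow> nat" where
  "absdiff x y = (if x \<le> y then y - x else x - y)"

text \<open>A linear realization of a multiset L of positive integers with |L| = v - 1: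
  a Hamiltonian path [x_0,...,x_{v-1}] of the complete graph on {0,...,v-1}
  (i.e. an ordering of all vertices) whose multiset of edge lengths equals L.\<close>
definition linear_realization :: "nat multiset \<Rightarrow> nat list \<Rightarrow> bool" where
  "linear_realization L xs \<longleftrightarrow>
     length xs = size L + 1 \<and> distinct xs \<and> set xs = {0..<length xs} \<and>
     mset (map (\<lambda>i. absdiff (xs ! i) (xs ! Suc i)) [0..<length xs - 1]) = L"

definition admits_linear_realization :: "nat multiset \<Rightarrow> bool" where
  "admits_linear_realization L \<longleftrightarrow> (\<exists>xs. linear_realization L xs)"

end

theory Submission
  imports Defs
begin

text \<open>Sort the vertices \<open>0, \<dots>, t + c - 1\<close> into columns by their residue mod \<open>t\<close>; column \<open>r\<close>
  is \<open>r, r + t, r + 2t, \<dots>\<close>. A path that runs up one column, down the next, and so on,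
  uses edges of length \<open>t\<close> inside the columns, \<open>c\<close> of them altogether, and turns from column \<open>r\<close>
  to column \<open>r'\<close> either at the bottom, with length \<open>|r - r'|\<close>, or at the top. Writing
  \<open>s = c mod t\<close>, the top of column \<open>r\<close> is \<open>c + r - s\<close> for \<open>r \<ge> s\<close> and \<open>c + r + t - s\<close> for \<open>r < s\<close>,
  so a top turn also has length \<open>|r - r'|\<close> when \<open>r\<close> and \<open>r'\<close> lie on the same side of \<open>s\<close>.
  It therefore suffices to visit the columns in the order of a path through \<open>{0..<s}\<close>
  followed by a path through \<open>{s..<t}\<close> with \<open>a\<close> edges of length 1 and \<open>b\<close> of length 2,
  starting the snake so that the passage between the two blocks is a bottom turn.
  Such paths are glued together from zigzags and runs of consecutive integers.\<close>

fun edge_lengths :: "nat list \<Rightarrow> nat multiset" where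
  "edge_lengths (x # y # zs) = add_mset (absdiff x y) (edge_lengths (y # zs))"
| "edge_lengths _ = {#}"

lemma absdiff_commute: "absdiff x y = absdiff y x"
  by (simp add: absdiff_def)

lemma edge_lengths_Cons:
  "xs \<noteq> [] \<Longrightarrow> edge_lengths (x # xs) = add_mset (absdiff x (hd xs)) (edge_lengths xs)"
  by (cases xs) auto

lemma edge_lengths_append:
  "xs \<noteq> [] \<Longrightarrow> ys \<noteq> [] \<Longrightarrow>
   edge_lengths (xs @ ys) = add_mset (absdiff (last xs) (hd ys)) (edge_lengths xs + edge_lengths ys)"
  by (induction xs rule: edge_lengths.induct) (auto simp: edge_lengths_Cons)

lemma edge_lengths_rev: "edge_lengths (rev xs) = edge_lengths xs"
proof (induction xs)
  case (Cons x xs)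
  then show ?case
    by (cases "xs = []")
      (simp_all add: edge_lengths_append edge_lengths_Cons last_rev absdiff_commute)
qed simp

lemma edge_lengths_map_isometry:
  "(\<And>x y. x \<in> set xs \<Longrightarrow> y \<in> set xs \<Longrightarrow> absdiff (f x) (f y) = absdiff x y)
   \<Longrightarrow> edge_lengths (map f xs) = edge_lengths xs"
  by (induction xs rule: edge_lengths.induct) auto

lemma size_edge_lengths: "size (edge_lengths xs) = length xs - 1"
  by (induction xs rule: edge_lengths.induct) auto

lemma edge_lengths_conv_nth:
  "edge_lengths xs = mset (map (\<lambda>i. absdiff (xs ! i) (xs ! Suc i)) [0..<length xs - 1])"
proof (induction xs rule: edge_lengths.induct)
  case (1 x y zs)
  have "[0..<length (x # y # zs) - 1] = 0 # map Suc [0..<length (y # zs) - 1]"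
    by (simp add: map_Suc_upt upt_conv_Cons del: upt_Suc)
  then show ?case using 1 by (simp del: upt_Suc add: comp_def)
qed auto

lemma admits_linear_realizationI:
  assumes "xs \<noteq> []" "distinct xs" "set xs = {0..<length xs}"
  shows "admits_linear_realization (edge_lengths xs)"
  unfolding admits_linear_realization_def linear_realization_def
  using assms by (intro exI[of _ xs]) (simp add: size_edge_lengths edge_lengths_conv_nth)

lemma zigzag_path:
  assumes "2 \<le> L"
  shows "\<exists>Z. distinct Z \<and> set Z = {0..<L} \<and> hd Z = L - 2 \<and> last Z = L - 1
    \<and> edge_lengths Z = add_mset 1 (replicate_mset (L - 2) 2)"
  using assms
proof (induction L rule: less_induct)
  case (less L)
  consider "L = 2" | "L = 3" | "4 \<le> L" using less.prems by linarith
  then show ?case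
  proof cases
    case 1
    then show ?thesis by (intro exI[of _ "[0, 1]"]) (auto simp: absdiff_def)
  next
    case 2
    then show ?thesis by (intro exI[of _ "[1, 0, 2]"]) (auto simp: absdiff_def)
  next
    case 3
    have "L - 2 - 2 = L - 4" "L - 2 - 1 = L - 3" by simp_all
    then obtain Z where Z: "distinct Z" "set Z = {0..<L - 2}" "hd Z = L - 4" "last Z = L - 3"
      "edge_lengths Z = add_mset 1 (replicate_mset (L - 4) 2)"
      using less.IH[of "L - 2"] 3 by fastforce
    have "Z \<noteq> []" using Z(2) 3 by auto
    have "L - 2 = Suc (Suc (L - 4))" using 3 by simp
    then have "replicate_mset (L - 2) (2::nat) = add_mset 2 (add_mset 2 (replicate_mset (L - 4) 2))"
      by simp
    moreover have "absdiff (L - 2) (L - 4) = 2" "absdiff (L - 3) (L - 1) = 2"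
      using 3 unfolding absdiff_def by arith+
    then have "edge_lengths ((L - 2) # Z @ [L - 1]) = add_mset 2 (add_mset 2 (edge_lengths Z))"
      using Z \<open>Z \<noteq> []\<close> by (simp add: edge_lengths_Cons edge_lengths_append)
    ultimately show ?thesis
      using Z 3 by (intro exI[of _ "(L - 2) # Z @ [L - 1]"]) auto
  qed
qed

lemma interval_path_ending_at_top:
  assumes "1 \<le> L" "k \<le> L - 2"
  shows "\<exists>P. distinct P \<and> set P = {0..<L} \<and> last P = L - 1
    \<and> edge_lengths P = replicate_mset (L - 1 - k) 1 + replicate_mset k 2"
  using assms
proof (induction L rule: less_induct)
  case (less L)
  consider "L = 1" | "2 \<le> L" "k = L - 2" | "3 \<le> L" "k \<le> L - 3" using less.prems by linarith
  then show ?case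
  proof cases
    case 1
    then show ?thesis using less.prems by (intro exI[of _ "[0]"]) auto
  next
    case 2
    then show ?thesis using zigzag_path[of L] by auto
  next
    case 3
    have "\<exists>P. distinct P \<and> set P = {0..<L - 1} \<and> last P = L - 1 - 1
      \<and> edge_lengths P = replicate_mset (L - 1 - 1 - k) 1 + replicate_mset k 2"
      by (rule less.IH) (use 3 in auto)
    moreover have "L - 1 - 1 = L - 2" by simp
    ultimately obtain P where P: "distinct P" "set P = {0..<L - 1}" "last P = L - 2"
      "edge_lengths P = replicate_mset (L - 2 - k) 1 + replicate_mset k 2"
      by auto
    have "P \<noteq> []" using P(2) 3 by auto
    have "edge_lengths (P @ [L - 1]) = add_mset 1 (edge_lengths P)"
      using P \<open>P \<noteq> []\<close> 3 by (simp add: edge_lengths_append absdiff_def)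
    moreover have "L - 1 - k = Suc (L - 2 - k)" using 3 by simp
    ultimately show ?thesis using P 3 by (intro exI[of _ "P @ [L - 1]"]) auto
  qed
qed

lemma interval_path_reflect_shift:
  assumes "distinct Z" "set Z = {0..<L}" "last Z = L - 1" "0 < L"
  shows "\<exists>Q. distinct Q \<and> set Q = {s..<s + L} \<and> hd Q = s \<and> edge_lengths Q = edge_lengths Z"
proof (intro exI conjI)
  let ?f = "\<lambda>x. s + (L - 1 - x)"
  have "Z \<noteq> []" using assms by auto
  have "inj_on ?f {0..<L}" by (auto simp: inj_on_def)
  then show "distinct (map ?f (rev Z))" using assms by (simp add: distinct_map)
  have "?f ` {0..<L} = {s..<s + L}"
  proof
    show "{s..<s + L} \<subseteq> ?f ` {0..<L}"
    proof
      fix y assume "y \<in> {s..<s + L}"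
      then have "y = ?f (L - 1 - (y - s))" "L - 1 - (y - s) \<in> {0..<L}" by auto
      then show "y \<in> ?f ` {0..<L}" by blast
    qed
  qed auto
  then show "set (map ?f (rev Z)) = {s..<s + L}" using assms by simp
  show "hd (map ?f (rev Z)) = s" using assms \<open>Z \<noteq> []\<close> by (simp add: hd_map hd_rev)
  have "edge_lengths (map ?f (rev Z)) = edge_lengths (rev Z)"
    by (rule edge_lengths_map_isometry) (use assms in \<open>auto simp: absdiff_def\<close>)
  then show "edge_lengths (map ?f (rev Z)) = edge_lengths Z" by (simp add: edge_lengths_rev)
qed

lemma split_interval_path:
  assumes "s < t" "a + b = t - 1" "2 \<le> a"
  shows "\<exists>P Q. distinct P \<and> distinct Q \<and> set P = {0..<s} \<and> set Q = {s..<t}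
    \<and> edge_lengths (P @ Q) = replicate_mset a 1 + replicate_mset b 2"
proof -
  \<comment> \<open>Either the 2-steps can be shared between the two blocks, which are then joined by a
    1-step, or \<open>a = 2\<close> and both blocks are zigzags joined by a 2-step from \<open>s - 2\<close> to \<open>s\<close>.\<close>
  consider "s = 0" | "0 < s" "b \<le> (s - 2) + (t - s - 2)" | "2 \<le> s" "s + 2 \<le> t" "a = 2"
    using assms by linarith
  then show ?thesis
  proof cases
    case 1
    have "1 \<le> t" "b \<le> t - 2" "t - 1 - b = a" using assms by linarith+
    then obtain Q where "distinct Q" "set Q = {0..<t}"
      "edge_lengths Q = replicate_mset a 1 + replicate_mset b 2"
      using interval_path_ending_at_top[of t b] by auto
    then show ?thesis using 1 by (intro exI[of _ "[]"] exI[of _ Q]) auto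
  next
    case 2
    define k1 where "k1 = min b (s - 2)"
    define k2 where "k2 = b - k1"
    have k: "k1 \<le> s - 2" "k2 \<le> t - s - 2" "k1 + k2 = b"
      using 2 by (auto simp: k1_def k2_def)
    have ones: "1 + (s - 1 - k1) + (t - s - 1 - k2) = a" using 2 k assms by linarith
    obtain P where P: "distinct P" "set P = {0..<s}" "last P = s - 1"
      "edge_lengths P = replicate_mset (s - 1 - k1) 1 + replicate_mset k1 2"
      using interval_path_ending_at_top[of s k1] 2 k by auto
    obtain Z where Z: "distinct Z" "set Z = {0..<t - s}" "last Z = t - s - 1"
      "edge_lengths Z = replicate_mset (t - s - 1 - k2) 1 + replicate_mset k2 2"
      using interval_path_ending_at_top[of "t - s" k2] assms k(2) by fastforce
    obtain Q where Q: "distinct Q" "set Q = {s..<t}" "hd Q = s" "edge_lengths Q = edge_lengths Z"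
      using interval_path_reflect_shift[OF Z(1-3), of s] assms by auto
    have "P \<noteq> []" "Q \<noteq> []" using P(2) Q(2) 2 assms by auto
    then have "edge_lengths (P @ Q) = add_mset 1 (edge_lengths P + edge_lengths Z)"
      using P Q 2 by (simp add: edge_lengths_append absdiff_def)
    also have "\<dots> = replicate_mset a 1 + replicate_mset b 2"
      unfolding P(4) Z(4) multiset_eq_iff using ones k(3) by auto
    finally show ?thesis using P Q by blast
  next
    case 3
    obtain Z where Z: "distinct Z" "set Z = {0..<s}" "hd Z = s - 2"
      "edge_lengths Z = add_mset 1 (replicate_mset (s - 2) 2)"
      using zigzag_path[of s] 3 by auto
    obtain Y where Y: "distinct Y" "set Y = {0..<t - s}" "last Y = t - s - 1"
      "edge_lengths Y = add_mset 1 (replicate_mset (t - s - 2) 2)"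
    proof -
      have "2 \<le> t - s" using 3 by linarith
      then show ?thesis using zigzag_path[of "t - s"] that by blast
    qed
    obtain Q where Q: "distinct Q" "set Q = {s..<t}" "hd Q = s" "edge_lengths Q = edge_lengths Y"
      using interval_path_reflect_shift[OF Y(1-3), of s] 3 by auto
    have "Z \<noteq> []" "Q \<noteq> []" using Z(2) Q(2) 3 by auto
    then have "edge_lengths (rev Z @ Q) = add_mset 2 (edge_lengths Z + edge_lengths Y)"
      using Z Q 3 by (simp add: edge_lengths_append edge_lengths_rev last_rev absdiff_def)
    also have "\<dots> = replicate_mset a 1 + replicate_mset b 2"
      unfolding Z(4) Y(4) multiset_eq_iff using 3 assms by auto
    finally show ?thesis using Z Q by (intro exI[of _ "rev Z"] exI[of _ Q]) auto
  qed
qed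

text \<open>If column \<open>r\<close> runs from \<open>r\<close> up to
  \<open>f r\<close>, the turns between consecutive columns have the lengths \<open>turn_lengths f d\<close>.\<close>

fun snake :: "bool \<Rightarrow> nat list list \<Rightarrow> nat list" where
  "snake d [] = []"
| "snake d (C # Cs) = (if d then rev C else C) @ snake (\<not> d) Cs"

fun turn_lengths :: "(nat \<Rightarrow> nat) \<Rightarrow> bool \<Rightarrow> nat list \<Rightarrow> nat multiset" where
  "turn_lengths f d (x # y # zs) =
     add_mset (if d then absdiff x y else absdiff (f x) (f y)) (turn_lengths f (\<not> d) (y # zs))"
| "turn_lengths f d _ = {#}"

lemma edge_lengths_snake:
  assumes "\<forall>r\<in>set rs. col r \<noteq> [] \<and> hd (col r) = r"
  shows "edge_lengths (snake d (map col rs)) =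
    sum_list (map (edge_lengths \<circ> col) rs) + turn_lengths (last \<circ> col) d rs"
  using assms
proof (induction rs arbitrary: d rule: edge_lengths.induct)
  case (1 r r' rs)
  let ?C = "if d then rev (col r) else col r"
  have "snake (\<not> d) (map col (r' # rs)) \<noteq> []" and
    "hd (snake (\<not> d) (map col (r' # rs))) = (if d then r' else last (col r'))"
    using "1.prems" by (auto simp: hd_rev)
  moreover have "?C \<noteq> []" "last ?C = (if d then r else last (col r))"
    "edge_lengths ?C = edge_lengths (col r)"
    using "1.prems" by (auto simp: last_rev edge_lengths_rev)
  ultimately show ?case
    using "1.IH"[of "\<not> d"] "1.prems" by (auto simp: edge_lengths_append)
qed (auto simp: edge_lengths_rev)

lemma turn_lengths_isometric:
  "(\<And>x y. x \<in> set xs \<Longrightarrow> y \<in> set xs \<Longrightarrow> absdiff (f x) (f y) = absdiff x y)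
   \<Longrightarrow> turn_lengths f d xs = edge_lengths xs"
  by (induction f d xs rule: turn_lengths.induct) auto

lemma turn_lengths_append:
  "P \<noteq> [] \<Longrightarrow> Q \<noteq> [] \<Longrightarrow> turn_lengths f d (P @ Q) =
   add_mset (if d = even (length P - 1) then absdiff (last P) (hd Q)
             else absdiff (f (last P)) (f (hd Q)))
     (turn_lengths f d P + turn_lengths f (d = even (length P)) Q)"
proof (induction P arbitrary: d)
  case (Cons x P)
  show ?case
  proof (cases P)
    case Nil
    then show ?thesis using Cons.prems by (cases Q) auto
  next
    case (Cons z P')
    then show ?thesis using Cons.IH[of "\<not> d"] \<open>Q \<noteq> []\<close> by auto
  qed
qed simp

lemma turn_lengths_two_blocks:
  assumes "\<And>x y. x \<in> set P \<Longrightarrow> y \<in> set P \<Longrightarrow> absdiff (f x) (f y) = absdiff x y"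
    and "\<And>x y. x \<in> set Q \<Longrightarrow> y \<in> set Q \<Longrightarrow> absdiff (f x) (f y) = absdiff x y"
  shows "\<exists>d. turn_lengths f d (P @ Q) = edge_lengths (P @ Q)"
proof (cases "P = [] \<or> Q = []")
  case True
  then show ?thesis using turn_lengths_isometric assms by auto
next
  case False
  \<comment> \<open>Start so that the passage from P to Q is a turn at the bottom of the columns.\<close>
  then have "turn_lengths f (even (length P - 1)) (P @ Q) = edge_lengths (P @ Q)"
    using assms by (simp add: turn_lengths_append turn_lengths_isometric edge_lengths_append)
  then show ?thesis ..
qed

definition column_length :: "nat \<Rightarrow> nat \<Rightarrow> nat \<Rightarrow> nat" where
  "column_length t c r = c div t + (if r < c mod t then 2 else 1)"

definition column :: "nat \<Rightarrow> nat \<Rightarrow> nat \<Rightarrow> nat list" where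
  "column t c r = map (\<lambda>k. r + k * t) [0..<column_length t c r]"

lemma column_ne: "column t c r \<noteq> []"
  by (simp add: column_def column_length_def)

lemma hd_column: "hd (column t c r) = r"
  by (simp add: column_def column_length_def hd_map)

lemma last_column: "last (column t c r) = r + (column_length t c r - 1) * t"
  by (simp add: column_def column_length_def last_map)

lemma distinct_column: "0 < t \<Longrightarrow> distinct (column t c r)"
  by (simp add: column_def distinct_map inj_on_def)

lemma edge_lengths_arith_prog:
  "edge_lengths (map (\<lambda>k. r + k * t) [0..<m]) = replicate_mset (m - 1) t"
proof (induction m)
  case (Suc m)
  show ?case
  proof (cases "m = 0")
    case False
    then have "absdiff (r + (m - 1) * t) (r + m * t) = t"
      by (cases m) (simp_all add: absdiff_def)
    then show ?thesis using Suc.IH False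
      by (simp add: edge_lengths_append last_map) (metis Suc_pred replicate_mset_Suc)
  qed simp
qed simp

lemma edge_lengths_column:
  "edge_lengths (column t c r) = replicate_mset (column_length t c r - 1) t"
  by (simp add: column_def edge_lengths_arith_prog)

lemma column_bound:
  assumes "r < t"
  shows "r + k * t < t + c \<longleftrightarrow> k < column_length t c r"
proof -
  define q where "q = c div t"
  define s where "s = c mod t"
  define e :: nat where "e = (if r < s then 1 else 0)"
  have c: "c = q * t + s" using assms by (simp add: q_def s_def)
  have "s < t" using assms by (simp add: s_def)
  then have e: "e * t + r < t + s" "s \<le> r + e * t" using assms by (auto simp: e_def)
  have "k < column_length t c r \<longleftrightarrow> k \<le> q + e"
    by (simp add: column_length_def q_def s_def e_def less_Suc_eq_le)
  moreover have "r + k * t < t + c \<longleftrightarrow> k \<le> q + e"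
  proof
    assume "k \<le> q + e"
    then have "k * t \<le> q * t + e * t" using mult_le_mono1 add_mult_distrib by metis
    then show "r + k * t < t + c" using c e by linarith
  next
    assume less: "r + k * t < t + c"
    show "k \<le> q + e"
    proof (rule ccontr)
      assume "\<not> k \<le> q + e"
      then have "q * t + e * t + t \<le> k * t" using mult_le_mono1[of "q + e + 1" k t]
        by (simp add: algebra_simps)
      then show False using less c e by linarith
    qed
  qed
  ultimately show ?thesis by simp
qed

lemma set_column:
  assumes "0 < t" "r < t"
  shows "set (column t c r) = {x. x < t + c \<and> x mod t = r}"
proof
  show "set (column t c r) \<subseteq> {x. x < t + c \<and> x mod t = r}"
    using column_bound[OF assms(2)] assms(2) by (auto simp: column_def)
  show "{x. x < t + c \<and> x mod t = r} \<subseteq> set (column t c r)"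
  proof
    fix x assume x: "x \<in> {x. x < t + c \<and> x mod t = r}"
    then have "x = r + (x div t) * t" using div_mult_mod_eq[of x t] by simp
    moreover have "x div t < column_length t c r"
      using x column_bound[OF assms(2), of "x div t" c] calculation by simp
    ultimately show "x \<in> set (column t c r)"
      unfolding column_def set_map by (intro image_eqI[of x _ "x div t"]) auto
  qed
qed

lemma last_column_isometric:
  "(x < c mod t) = (y < c mod t) \<Longrightarrow>
   absdiff (last (column t c x)) (last (column t c y)) = absdiff x y"
  by (simp add: last_column column_length_def absdiff_def)

lemma mset_snake: "mset (snake d Cs) = mset (concat Cs)"
  by (induction Cs arbitrary: d) auto

lemma concat_columns:
  assumes "0 < t" "distinct rs" "set rs = {0..<t}"
  shows "distinct (concat (map (column t c) rs))"
    and "set (concat (map (column t c) rs)) = {0..<t + c}"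
proof -
  have "inj_on (column t c) (set rs)" by (metis hd_column inj_onI)
  moreover have "r = r'"
    if "x \<in> set (column t c r)" "x \<in> set (column t c r')" "r < t" "r' < t" for x r r'
    using that assms(1) set_column by auto
  ultimately show "distinct (concat (map (column t c) rs))"
    using assms by (intro distinct_concat) (auto simp: distinct_map distinct_column, metis)
  have "set (concat (map (column t c) rs)) = (\<Union>r<t. {x. x < t + c \<and> x mod t = r})"
    using assms set_column by auto
  also have "\<dots> = {0..<t + c}" using assms by auto
  finally show "set (concat (map (column t c) rs)) = {0..<t + c}" .
qed

lemma edge_lengths_snake_columns:
  "\<exists>N. edge_lengths (snake d (map (column t c) rs)) =
     replicate_mset N t + turn_lengths (last \<circ> column t c) d rs"
proof -
  have "sum_list (map (edge_lengths \<circ> column t c) rs)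
      = replicate_mset (\<Sum>r\<leftarrow>rs. column_length t c r - 1) t"
    by (induction rs) (auto simp: edge_lengths_column multiset_eq_iff)
  then have "edge_lengths (snake d (map (column t c) rs)) =
      replicate_mset (\<Sum>r\<leftarrow>rs. column_length t c r - 1) t
      + turn_lengths (last \<circ> column t c) d rs"
    using edge_lengths_snake[of rs "column t c" d] by (simp add: column_ne hd_column)
  then show ?thesis ..
qed

theorem proposition4p1:
  fixes t a b c :: nat
  assumes "t \<ge> 4" and "even t"
    and "a \<ge> 2" and "b > 0" and "c > 0"
    and "a + b = t - 1"
  shows "admits_linear_realization
           (replicate_mset a 1 + replicate_mset b 2 + replicate_mset c t)"
proof -
  have "0 < t" "c mod t < t" using assms by simp_all
  then obtain P Q where PQ: "distinct P" "distinct Q"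
    "set P = {0..<c mod t}" "set Q = {c mod t..<t}"
    "edge_lengths (P @ Q) = replicate_mset a 1 + replicate_mset b 2"
    using split_interval_path assms by blast
  define rs where "rs = P @ Q"
  have rs: "distinct rs" "set rs = {0..<t}" using PQ \<open>c mod t < t\<close> by (auto simp: rs_def)
  have "\<exists>d. turn_lengths (last \<circ> column t c) d rs = edge_lengths rs"
    unfolding rs_def by (rule turn_lengths_two_blocks) (simp_all add: PQ last_column_isometric)
  then obtain d where d: "turn_lengths (last \<circ> column t c) d rs = edge_lengths rs" ..
  define xs where "xs = snake d (map (column t c) rs)"
  have perm: "mset xs = mset (concat (map (column t c) rs))" by (simp add: xs_def mset_snake)
  have xs: "distinct xs" "set xs = {0..<t + c}"
    using concat_columns[OF \<open>0 < t\<close> rs, of c]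
      mset_eq_imp_distinct_iff[OF perm] mset_eq_setD[OF perm] by simp_all
  then have "length xs = t + c" using distinct_card by fastforce
  obtain N where N: "edge_lengths xs = replicate_mset N t + replicate_mset a 1 + replicate_mset b 2"
    using edge_lengths_snake_columns[of d t c rs] d PQ(5) unfolding xs_def rs_def
    by (auto simp: ac_simps)
  have "N = c"
    using size_edge_lengths[of xs] \<open>length xs = t + c\<close> assms(6) N \<open>0 < t\<close> by simp
  moreover have "admits_linear_realization (edge_lengths xs)"
    using xs \<open>length xs = t + c\<close> \<open>0 < t\<close> by (intro admits_linear_realizationI) auto
  ultimately show ?thesis using N by (simp add: ac_simps)
qed

end
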